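(* For any learning algorithm $\mathcal{A}$ (and any subpopulations $\mathcal{D}_1,\dots,\mathcal{D}_K$, loss $\ell$ and $N\ge1$), one of the following two scenarios must hold: (1) $L^{\mathrm{same}}({\bm{p}})=L^*_N({\bm{p}})$ holds only for a (Lebesgue) measure-zero subset of ${\bm{p}}\in\Delta_K$; (2) $\nabla L^{\mathrm{same}}({\bm{p}})=(f_1({\bm{p}}),\dots,f_K({\bm{p}}))$ (for all ${\bm{p}}\in\mathbb{R}^K_{\ge0}\setminus\{\mathbf{0}\}$).
   Context: Setting: distributions $\mathcal{D}_1,\dots,\mathcal{D}_K$ on $\mathcal{Z}$, a loss $\ell(h,{\bm{z}})$ (all expectations finite), $N\ge1$, a learning algorithm $\mathcal{A}:\mathcal{Z}^N\to\mathcal{H}$. For ${\bm{r}}\in\Delta_K=\{{\bm{r}}\ge0:\sum_kr_k=1\}$, $\bar e_k({\bm{r}})=\mathbb{E}_{S\sim(\sum_jr_j\mathcal{D}_j)^N}\mathbb{E}_{{\bm{z}}\sim\mathcal{D}_k}[\ell(\mathcal{A}(S),{\bm{z}})]$; $f_k({\bm{r}})=\bar e_k({\bm{r}}/|{\bm{r}}|)$ on $\mathbb{R}^K_{\ge0}\setminus\{\mathbf{0}\}$ with $|{\bm{r}}|=\sum_jr_j$; $L_N({\bm{p}},{\bm{r}})=\sum_kp_kf_k({\bm{r}})$; $L^{\mathrm{same}}({\bm{p}})=\sum_kp_kf_k({\bm{p}})$; $L^*_N({\bm{p}})=\min_{{\bm{r}}\in\Delta_K}L_N({\bm{p}},{\bm{r}})$.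 *)

theory Defs
  imports "HOL-Probability.Probability"
begin

definition prob_simplex :: "(real^'k::finite) set" where
  "prob_simplex = {r. (\<forall>k. 0 \<le> r$k) \<and> (\<Sum>k\<in>UNIV. r$k) = 1}"

definition orthant_nz :: "(real^'k::finite) set" where
  "orthant_nz = {r. \<forall>k. 0 \<le> r$k} - {0}"

definition mixture :: "'z measure \<Rightarrow> ('k::finite \<Rightarrow> 'z measure) \<Rightarrow> real^'k \<Rightarrow> 'z measure" where
  "mixture M D r = measure_of (space M) (sets M)
     (\<lambda>X. \<Sum>k\<in>UNIV. ennreal (r$k) * emeasure (D k) X)"

definition exp_err :: "'z measure \<Rightarrow> ('k::finite \<Rightarrow> 'z measure) \<Rightarrow> ('h \<Rightarrow> 'z \<Rightarrow> real)
    \<Rightarrow> ((nat \<Rightarrow> 'z) \<Rightarrow> 'h) \<Rightarrow> nat \<Rightarrow> real^'k \<Rightarrow> 'k \<Rightarrow> real" where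
  "exp_err M D loss A N r k =
     (\<integral>S. (\<integral>z. loss (A S) z \<partial>(D k)) \<partial>(PiM {..<N} (\<lambda>_. mixture M D r)))"

definition ferr :: "'z measure \<Rightarrow> ('k::finite \<Rightarrow> 'z measure) \<Rightarrow> ('h \<Rightarrow> 'z \<Rightarrow> real)
    \<Rightarrow> ((nat \<Rightarrow> 'z) \<Rightarrow> 'h) \<Rightarrow> nat \<Rightarrow> real^'k \<Rightarrow> 'k \<Rightarrow> real" where
  "ferr M D loss A N r k = exp_err M D loss A N ((1 / (\<Sum>j\<in>UNIV. r$j)) *\<^sub>R r) k"

definition LN :: "'z measure \<Rightarrow> ('k::finite \<Rightarrow> 'z measure) \<Rightarrow> ('h \<Rightarrow> 'z \<Rightarrow> real)
    \<Rightarrow> ((nat \<Rightarrow> 'z) \<Rightarrow> 'h) \<Rightarrow> nat \<Rightarrow> real^'k \<Rightarrow> real^'k \<Rightarrow> real" where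
  "LN M D loss A N p r = (\<Sum>k\<in>UNIV. p$k * ferr M D loss A N r k)"

definition Lsame :: "'z measure \<Rightarrow> ('k::finite \<Rightarrow> 'z measure) \<Rightarrow> ('h \<Rightarrow> 'z \<Rightarrow> real)
    \<Rightarrow> ((nat \<Rightarrow> 'z) \<Rightarrow> 'h) \<Rightarrow> nat \<Rightarrow> real^'k \<Rightarrow> real" where
  "Lsame M D loss A N p = (\<Sum>k\<in>UNIV. p$k * ferr M D loss A N p k)"

definition Lstar :: "'z measure \<Rightarrow> ('k::finite \<Rightarrow> 'z measure) \<Rightarrow> ('h \<Rightarrow> 'z \<Rightarrow> real)
    \<Rightarrow> ((nat \<Rightarrow> 'z) \<Rightarrow> 'h) \<Rightarrow> nat \<Rightarrow> real^'k \<Rightarrow> real" where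
  "Lstar M D loss A N p = (INF r\<in>prob_simplex. LN M D loss A N p r)"

text \<open>A subset of the simplex has (K-1)-dimensional Lebesgue measure zero: its image under
  dropping one coordinate k0 is contained in a Lebesgue null set of R^(K-1).
  (Independent of the choice of k0; we require it for every k0.)\<close>

definition simplex_null :: "(real^'k::finite) set \<Rightarrow> bool" where
  "simplex_null S \<longleftrightarrow> (\<forall>k0. \<exists>Z \<in> null_sets (PiM (UNIV - {k0}) (\<lambda>_. lborel)).
      (\<lambda>p. restrict (\<lambda>i. p$i) (UNIV - {k0})) ` S \<subseteq> Z)"

end

theory Submission
  imports Defs "HOL-Computational_Algebra.Polynomial"
begin

text \<open>Expanding the N-fold product of the mixture of the D_j shows that on the simplex the
  expected error e_k(r) is a homogeneous polynomial Q_k(r) of degree N: the coefficient of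
  r_(s 0) * ... * r_(s (N-1)) is the expected loss on D_k when the i-th sample is drawn from
  D_(s i). Hence L_same(p) = (sum_k p_k Q_k(p)) / |p|^N, and its gradient is (f_1(p), ..., f_K(p))
  exactly when the polynomials H_j(p) = |p| sum_k p_k dQ_k/dr_j(p) - N sum_k p_k Q_k(p) vanish at p.

  If p is an interior point of the simplex with L_same(p) = L*_N(p), then p minimises
  r |-> sum_k p_k Q_k(r) on the simplex. By the Lagrange condition the partial derivatives
  sum_k p_k dQ_k/dr_j(p) coincide for all j, and Euler's identity for homogeneous polynomials
  identifies their common value, so H_j(p) = 0. Either all H_j vanish on the orthant, which is
  scenario (2), or some H_j is nonzero somewhere and, being homogeneous, somewhere on the simplex.
  Then the points with L_same = L*_N lie in the zero set of H_j or in the zero set of prod_i p_i,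
  and the zero set of a polynomial that does not vanish identically on the simplex is a null set,
  which is scenario (1).\<close>

section \<open>Calculus on the simplex\<close>

lemma linear_vec_expansion:
  fixes f :: "real^'n \<Rightarrow> real"
  assumes "linear f"
  shows "f x = (\<Sum>i\<in>UNIV. x$i * f (axis i 1))"
proof -
  have "f x = f (\<Sum>i\<in>UNIV. x$i *\<^sub>R axis i 1)"
    using basis_expansion[of x] by (simp add: scalar_mult_eq_scaleR)
  also have "\<dots> = (\<Sum>i\<in>UNIV. x$i * f (axis i 1))"
    using assms by (simp add: linear_sum linear_scale)
  finally show ?thesis .
qed

lemma has_derivative_vec_nth: "((\<lambda>x::real^'k. x$i) has_derivative (\<lambda>h. h$i)) F"
  by (rule bounded_linear_imp_has_derivative) (rule bounded_linear_vec_nth)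

lemma orthant_nz_sum_pos:
  assumes "p \<in> orthant_nz"
  shows "0 < (\<Sum>i\<in>UNIV. p$i)"
proof -
  from assms obtain i where "p$i \<noteq> 0" "\<forall>i. 0 \<le> p$i"
    by (auto simp: orthant_nz_def vec_eq_iff)
  then have "0 < p$i" "p$i \<le> (\<Sum>i\<in>UNIV. p$i)"
    by (auto simp: order_less_le intro: member_le_sum)
  then show ?thesis by linarith
qed

lemma normalize_in_prob_simplex:
  assumes "p \<in> orthant_nz"
  shows "(1 / (\<Sum>i\<in>UNIV. p$i)) *\<^sub>R p \<in> prob_simplex"
  using assms orthant_nz_sum_pos[OF assms]
  by (simp add: prob_simplex_def orthant_nz_def divide_nonneg_pos flip: sum_divide_distrib)

lemma simplex_interior_min_partials_eq:
  fixes \<phi> :: "real^'k::finite \<Rightarrow> real"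
  assumes \<phi>: "(\<phi> has_derivative \<phi>') (at p)"
    and p: "p \<in> prob_simplex" "\<And>i. 0 < p$i" and min: "\<And>r. r \<in> prob_simplex \<Longrightarrow> \<phi> p \<le> \<phi> r"
  shows "\<phi>' (axis i 1) = \<phi>' (axis l 1)"
proof -
  define v :: "real^'k" where "v = axis i 1 - axis l 1"
  define d where "d = min (p$i) (p$l)"
  have d: "0 < d" using p(2) by (simp add: d_def)
  have "p + y *\<^sub>R v \<in> prob_simplex" if "\<bar>y\<bar> < d" for y
  proof -
    have "0 \<le> (p + y *\<^sub>R v)$m" for m
      using that p(2)[of m] by (auto simp: v_def axis_def d_def)
    moreover have "(\<Sum>m\<in>UNIV. (p + y *\<^sub>R v)$m) = 1"
      using p(1) by (simp add: v_def sum.distrib sum_subtractf axis_def prob_simplex_def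
          flip: sum_distrib_left)
    ultimately show ?thesis by (simp add: prob_simplex_def)
  qed
  then have "\<forall>y. \<bar>0 - y\<bar> < d \<longrightarrow> \<phi> (p + 0 *\<^sub>R v) \<le> \<phi> (p + y *\<^sub>R v)"
    using min by simp
  moreover have "((\<lambda>y. \<phi> (p + y *\<^sub>R v)) has_real_derivative \<phi>' v) (at 0)"
  proof -
    have "((\<lambda>y. p + y *\<^sub>R v) has_derivative (\<lambda>y. y *\<^sub>R v)) (at 0)"
      by (auto intro!: derivative_eq_intros)
    then have "((\<lambda>y. \<phi> (p + y *\<^sub>R v)) has_derivative (\<lambda>y. \<phi>' (y *\<^sub>R v))) (at 0)"
      using has_derivative_compose[of "\<lambda>y. p + y *\<^sub>R v", of _ 0 UNIV \<phi> \<phi>'] \<phi> by simp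
    moreover have "(\<lambda>y. \<phi>' (y *\<^sub>R v)) = (*) (\<phi>' v)"
      using linear_scale[OF has_derivative_linear[OF \<phi>]] by (simp add: fun_eq_iff)
    ultimately show ?thesis by (simp add: has_field_derivative_def)
  qed
  ultimately have "\<phi>' v = 0" by (intro DERIV_local_min[OF _ d])
  then show ?thesis using linear_diff[OF has_derivative_linear[OF \<phi>]] by (simp add: v_def)
qed

section \<open>Homogeneous polynomials\<close>

definition assignments :: "nat \<Rightarrow> (nat \<Rightarrow> 'k::finite) set" where
  "assignments n = PiE {..<n} (\<lambda>_. UNIV)"

lemma finite_assignments [simp]: "finite (assignments n)"
  unfolding assignments_def by (simp add: finite_PiE)

lemma sum_assignments_Suc:
  "(\<Sum>s\<in>assignments (Suc n). X s) = (\<Sum>k\<in>UNIV. \<Sum>s\<in>assignments n. X (s(n := k)))"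
proof -
  have eq: "assignments (Suc n) = (\<lambda>(k, s). s(n := k)) ` (UNIV \<times> assignments n)"
    by (simp add: assignments_def lessThan_Suc PiE_insert_eq)
  have inj: "inj_on (\<lambda>(k, s). s(n := k)) (UNIV \<times> assignments n)"
    unfolding assignments_def by (rule inj_combinator) simp
  have "(\<Sum>s\<in>assignments (Suc n). X s) = (\<Sum>(k, s)\<in>UNIV \<times> assignments n. X (s(n := k)))"
    unfolding eq sum.reindex[OF inj] by (simp add: case_prod_unfold)
  also have "\<dots> = (\<Sum>k\<in>UNIV. \<Sum>s\<in>assignments n. X (s(n := k)))"
    by (rule sum.cartesian_product[symmetric])
  finally show ?thesis .
qed

definition hom_poly :: "((nat \<Rightarrow> 'k::finite) \<Rightarrow> real) \<Rightarrow> nat \<Rightarrow> real^'k \<Rightarrow> real" where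
  "hom_poly a n r = (\<Sum>s\<in>assignments n. a s * (\<Prod>i<n. r$(s i)))"

definition hom_poly_deriv :: "((nat \<Rightarrow> 'k::finite) \<Rightarrow> real) \<Rightarrow> nat \<Rightarrow> real^'k \<Rightarrow> real^'k \<Rightarrow> real" where
  "hom_poly_deriv a n r h =
     (\<Sum>s\<in>assignments n. a s * (\<Sum>m<n. h$(s m) * (\<Prod>i\<in>{..<n} - {m}. r$(s i))))"

lemma has_derivative_hom_poly: "(hom_poly a n has_derivative hom_poly_deriv a n r) (at r within S)"
  unfolding hom_poly_def[abs_def] hom_poly_deriv_def[abs_def]
  by (intro has_derivative_sum has_derivative_mult_right has_derivative_prod has_derivative_vec_nth)

lemma hom_poly_deriv_expansion:
  "hom_poly_deriv a n r h = (\<Sum>j\<in>UNIV. h$j * hom_poly_deriv a n r (axis j 1))"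
  using has_derivative_hom_poly[THEN has_derivative_linear] by (rule linear_vec_expansion)

lemma hom_poly_scaleR: "hom_poly a n (t *\<^sub>R r) = t ^ n * hom_poly a n r"
  unfolding hom_poly_def by (simp add: prod.distrib sum_distrib_left mult.left_commute)

lemma hom_poly_deriv_scaleR: "hom_poly_deriv a n (t *\<^sub>R r) h = t ^ (n - 1) * hom_poly_deriv a n r h"
proof -
  have "(\<Prod>i\<in>{..<n} - {m}. t * r$(s i)) = t ^ (n - 1) * (\<Prod>i\<in>{..<n} - {m}. r$(s i))"
    if "m < n" for m s
    using that by (simp add: prod.distrib)
  then show ?thesis
    unfolding hom_poly_deriv_def sum_distrib_left
    by (intro sum.cong refl) (simp add: mult.left_commute)
qed

lemma hom_poly_deriv_self: "hom_poly_deriv a n r r = real n * hom_poly a n r"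
proof -
  have "(\<Sum>m<n. r$(s m) * (\<Prod>i\<in>{..<n} - {m}. r$(s i))) = real n * (\<Prod>i<n. r$(s i))" for s
  proof -
    have "r$(s m) * (\<Prod>i\<in>{..<n} - {m}. r$(s i)) = (\<Prod>i<n. r$(s i))" if "m < n" for m
      using that by (simp add: prod.remove[of "{..<n}" m])
    then show ?thesis by simp
  qed
  then show ?thesis
    unfolding hom_poly_deriv_def hom_poly_def by (simp add: sum_distrib_left mult.left_commute)
qed

lemma abs_hom_poly_le:
  assumes r: "r \<in> prob_simplex"
  shows "\<bar>hom_poly a n r\<bar> \<le> (\<Sum>s\<in>assignments n. \<bar>a s\<bar>)"
proof -
  have r01: "0 \<le> r$i \<and> r$i \<le> 1" for i
  proof -
    have "r$i \<le> (\<Sum>i\<in>UNIV. r$i)" using r by (intro member_le_sum) (auto simp: prob_simplex_def)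
    then show ?thesis using r by (simp add: prob_simplex_def)
  qed
  have "\<bar>hom_poly a n r\<bar> \<le> (\<Sum>s\<in>assignments n. \<bar>a s\<bar> * \<bar>\<Prod>i<n. r$(s i)\<bar>)"
    unfolding hom_poly_def abs_mult[symmetric] by (rule sum_abs)
  also have "\<dots> \<le> (\<Sum>s\<in>assignments n. \<bar>a s\<bar>)"
    using r01 by (intro sum_mono mult_left_le) (auto simp: prod_le_1 prod_nonneg)
  finally show ?thesis .
qed

section \<open>Zero sets of polynomials\<close>

inductive polyfun :: "('a \<Rightarrow> real) set \<Rightarrow> ('a \<Rightarrow> real) \<Rightarrow> bool" for C where
  const: "polyfun C (\<lambda>x. c)"
| var: "f \<in> C \<Longrightarrow> polyfun C f"
| add: "polyfun C f \<Longrightarrow> polyfun C g \<Longrightarrow> polyfun C (\<lambda>x. f x + g x)"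
| mult: "polyfun C f \<Longrightarrow> polyfun C g \<Longrightarrow> polyfun C (\<lambda>x. f x * g x)"

lemma polyfun_diff:
  assumes "polyfun C f" "polyfun C g"
  shows "polyfun C (\<lambda>x. f x - g x)"
proof -
  have "polyfun C (\<lambda>x. f x + (\<lambda>_. -1) x * g x)"
    by (intro polyfun.add polyfun.mult polyfun.const assms)
  then show ?thesis by simp
qed

lemma polyfun_sum:
  "finite S \<Longrightarrow> (\<And>i. i \<in> S \<Longrightarrow> polyfun C (f i)) \<Longrightarrow> polyfun C (\<lambda>x. \<Sum>i\<in>S. f i x)"
  by (induction S rule: finite_induct) (auto intro: polyfun.intros)

lemma polyfun_prod:
  "finite S \<Longrightarrow> (\<And>i. i \<in> S \<Longrightarrow> polyfun C (f i)) \<Longrightarrow> polyfun C (\<lambda>x. \<Prod>i\<in>S. f i x)"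
  by (induction S rule: finite_induct) (auto intro: polyfun.intros)

lemma polyfun_compose:
  "polyfun C f \<Longrightarrow> (\<And>c. c \<in> C \<Longrightarrow> polyfun C' (\<lambda>x. c (\<sigma> x))) \<Longrightarrow> polyfun C' (\<lambda>x. f (\<sigma> x))"
  by (induction rule: polyfun.induct) (auto intro: polyfun.intros)

lemma polyfun_compose_poly:
  "polyfun C f \<Longrightarrow> (\<And>c. c \<in> C \<Longrightarrow> \<exists>q. \<forall>y. c (\<tau> y) = poly q y) \<Longrightarrow> \<exists>q. \<forall>y. f (\<tau> y) = poly q y"
proof (induction rule: polyfun.induct)
  case (const c)
  show ?case by (rule exI[of _ "[:c:]"]) simp
next
  case (add f g)
  then obtain q1 q2 where "\<forall>y. f (\<tau> y) = poly q1 y" "\<forall>y. g (\<tau> y) = poly q2 y" by metis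
  then show ?case by (intro exI[of _ "q1 + q2"]) simp
next
  case (mult f g)
  then obtain q1 q2 where "\<forall>y. f (\<tau> y) = poly q1 y" "\<forall>y. g (\<tau> y) = poly q2 y" by metis
  then show ?case by (intro exI[of _ "q1 * q2"]) simp
qed simp

lemma polyfun_measurable:
  "polyfun ((\<lambda>i x. x i) ` I) f \<Longrightarrow> f \<in> borel_measurable (PiM I (\<lambda>_. lborel))"
  by (induction rule: polyfun.induct) auto

lemma polyfun_fun_upd:
  assumes "polyfun ((\<lambda>i x. x i) ` insert i J) f" and "i \<notin> J"
  shows "polyfun ((\<lambda>i x. x i) ` J) (\<lambda>x. f (x(i := y)))"
proof (rule polyfun_compose[OF assms(1)])
  fix c :: "(_ \<Rightarrow> real) \<Rightarrow> real" assume "c \<in> (\<lambda>i x. x i) ` insert i J"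
  then consider "c = (\<lambda>x. x i)" | l where "l \<in> J" "l \<noteq> i" "c = (\<lambda>x. x l)"
    using assms(2) by blast
  then show "polyfun ((\<lambda>i x. x i) ` J) (\<lambda>x. c (x(i := y)))"
    by cases (auto intro: polyfun.intros)
qed

lemma polyfun_line_zero_set_null:
  assumes f: "polyfun ((\<lambda>i x. x i) ` I) f" and y0: "f (x(i := y0)) \<noteq> 0"
  shows "{y. f (x(i := y)) = 0} \<in> null_sets lborel"
proof -
  have "\<exists>q. \<forall>y. c (x(i := y)) = poly q y" if "c \<in> (\<lambda>i x. x i) ` I" for c :: "(_ \<Rightarrow> real) \<Rightarrow> real"
  proof -
    from that obtain l where l: "c = (\<lambda>x. x l)" by auto
    show ?thesis
    proof (cases "l = i")
      case True
      then show ?thesis by (intro exI[of _ "[:0, 1:]"]) (simp add: l)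
    next
      case False
      then show ?thesis by (intro exI[of _ "[:x l:]"]) (simp add: l)
    qed
  qed
  then obtain q where q: "\<And>y. f (x(i := y)) = poly q y"
    using polyfun_compose_poly[OF f] by blast
  with y0 have "q \<noteq> 0" by auto
  then have "finite {y. f (x(i := y)) = 0}" unfolding q by (rule poly_roots_finite)
  then show ?thesis by (intro countable_imp_null_set_lborel countable_finite)
qed

text \<open>By Fubini and induction on the number of coordinates: almost every line parallel to a
  coordinate axis meets the zero set of a nonzero polynomial in finitely many points.\<close>

lemma polyfun_zero_set_null:
  fixes I :: "'i set"
  assumes "finite I" and "polyfun ((\<lambda>i x. x i) ` I) f"
    and "x0 \<in> space (PiM I (\<lambda>_. lborel))" and "f x0 \<noteq> 0"
  shows "{x \<in> space (PiM I (\<lambda>_. lborel)). f x = 0} \<in> null_sets (PiM I (\<lambda>_. lborel))"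
  using assms
proof (induction I arbitrary: f x0 rule: finite_induct)
  case empty
  then have "{x \<in> space (PiM {} (\<lambda>_. lborel)). f x = 0} = {}" by (auto simp: PiM_empty)
  then show ?case by (simp only: null_sets.empty_sets)
next
  case (insert i J)
  let ?P = "PiM (insert i J) (\<lambda>_. lborel :: real measure)"
  let ?PJ = "PiM J (\<lambda>_. lborel :: real measure)"
  interpret product_sigma_finite "\<lambda>_. lborel :: real measure"
    by (simp add: product_sigma_finite_def sigma_finite_lborel)
  define Z where "Z = {x \<in> space ?P. f x = 0}"
  have Z: "Z \<in> sets ?P"
    unfolding Z_def using polyfun_measurable[OF insert.prems(1)] by measurable
  define y0 where "y0 = x0 i"
  have "(restrict x0 J)(i := y0) = x0"
    using insert.prems(2) insert.hyps(2)
    by (auto simp: y0_def space_PiM PiE_def extensional_def fun_eq_iff)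
  then have f_ne: "f ((restrict x0 J)(i := y0)) \<noteq> 0" using insert.prems(3) by simp
  have null_J: "{x \<in> space ?PJ. f (x(i := y0)) = 0} \<in> null_sets ?PJ"
    by (rule insert.IH[OF polyfun_fun_upd[OF insert.prems(1) insert.hyps(2)] _ f_ne])
      (simp add: space_PiM del: restrict_apply)
  have slice: "(\<integral>\<^sup>+y. indicator Z (x(i := y)) \<partial>lborel) = 0"
    if x: "x \<in> space ?PJ" and "f (x(i := y0)) \<noteq> 0" for x
  proof -
    have null: "{y. f (x(i := y)) = 0} \<in> null_sets lborel"
      using that(2) by (rule polyfun_line_zero_set_null[OF insert.prems(1)])
    have "x(i := y) \<in> space ?P" for y
      using x insert.hyps(2) by (auto simp: space_PiM PiE_def extensional_def)
    then have "indicator Z (x(i := y)) = (indicator {y. f (x(i := y)) = 0} y :: ennreal)" for y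
      by (simp add: Z_def indicator_def)
    then have "(\<integral>\<^sup>+y. indicator Z (x(i := y)) \<partial>lborel) = emeasure lborel {y. f (x(i := y)) = 0}"
      using null_setsD2[OF null] by (simp del: sets_lborel)
    then show ?thesis using null_setsD1[OF null] by simp
  qed
  have AE_slice: "AE x in ?PJ. (\<integral>\<^sup>+y. indicator Z (x(i := y)) \<partial>lborel) = 0"
    using AE_not_in[OF null_J] AE_space by eventually_elim (auto intro: slice)
  have "emeasure ?P Z = (\<integral>\<^sup>+x. (\<integral>\<^sup>+y. indicator Z (x(i := y)) \<partial>lborel) \<partial>?PJ)"
    using product_nn_integral_insert[OF insert.hyps, of "indicator Z"] Z by simp
  also have "\<dots> = (\<integral>\<^sup>+x. 0 \<partial>?PJ)"
    by (rule nn_integral_cong_AE[OF AE_slice])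
  finally show ?case using Z unfolding Z_def by (intro null_setsI) simp_all
qed

lemma simplex_null_subset: "simplex_null T \<Longrightarrow> S \<subseteq> T \<Longrightarrow> simplex_null S"
  unfolding simplex_null_def by (meson image_mono subset_trans)

lemma simplex_null_Un:
  fixes S T :: "(real^'k::finite) set"
  assumes "simplex_null S" "simplex_null T"
  shows "simplex_null (S \<union> T)"
  unfolding simplex_null_def
proof
  fix k0 :: 'k
  let ?P = "PiM (UNIV - {k0}) (\<lambda>_. lborel :: real measure)"
  let ?proj = "\<lambda>p. restrict (\<lambda>i. p$i) (UNIV - {k0})"
  obtain Z1 Z2 where "Z1 \<in> null_sets ?P" "?proj ` S \<subseteq> Z1" "Z2 \<in> null_sets ?P" "?proj ` T \<subseteq> Z2"
    using assms unfolding simplex_null_def by meson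
  then show "\<exists>Z\<in>null_sets ?P. ?proj ` (S \<union> T) \<subseteq> Z"
    by (intro bexI[of _ "Z1 \<union> Z2"]) auto
qed

lemma simplex_null_polyfun_zero_set:
  fixes P :: "real^'k::finite \<Rightarrow> real"
  assumes P: "polyfun (range (\<lambda>i x. x$i)) P" and q: "q \<in> prob_simplex" "P q \<noteq> 0"
  shows "simplex_null {p \<in> prob_simplex. P p = 0}"
  unfolding simplex_null_def
proof
  fix k0 :: 'k
  define I where "I = UNIV - {k0}"
  let ?P = "PiM I (\<lambda>_. lborel :: real measure)"
  define proj :: "real^'k \<Rightarrow> 'k \<Rightarrow> real" where "proj p = restrict (\<lambda>i. p$i) I" for p
  define lift :: "('k \<Rightarrow> real) \<Rightarrow> real^'k" where
    "lift x = (\<chi> i. if i = k0 then 1 - (\<Sum>l\<in>I. x l) else x i)" for x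
  have lift_proj: "lift (proj p) = p" if "p \<in> prob_simplex" for p
  proof -
    have "(\<Sum>l\<in>UNIV. p$l) = p$k0 + (\<Sum>l\<in>I. p$l)"
      unfolding I_def by (simp add: sum.remove[of UNIV k0])
    then show ?thesis
      using that by (auto simp: vec_eq_iff lift_def proj_def I_def prob_simplex_def)
  qed
  have proj: "proj p \<in> space ?P" for p by (simp add: proj_def space_PiM)
  have "polyfun ((\<lambda>i x. x i) ` I) (\<lambda>x. P (lift x))"
  proof (rule polyfun_compose[OF P])
    fix c :: "real^'k \<Rightarrow> real" assume "c \<in> range (\<lambda>i x. x$i)"
    then obtain i where i: "c = (\<lambda>x. x$i)" by blast
    show "polyfun ((\<lambda>i x. x i) ` I) (\<lambda>x. c (lift x))"
    proof (cases "i = k0")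
      case True
      have "polyfun ((\<lambda>i x. x i) ` I) (\<lambda>x. 1 - (\<Sum>l\<in>I. x l))"
        by (intro polyfun_diff polyfun_sum polyfun.intros) (auto simp: I_def)
      then show ?thesis using True by (simp add: i lift_def)
    next
      case False
      then show ?thesis by (auto simp: i lift_def I_def intro: polyfun.var)
    qed
  qed
  moreover have "P (lift (proj q)) \<noteq> 0" using q by (simp add: lift_proj)
  ultimately have "{x \<in> space ?P. P (lift x) = 0} \<in> null_sets ?P"
    using proj by (intro polyfun_zero_set_null) (auto simp: I_def)
  moreover have "proj ` {p \<in> prob_simplex. P p = 0} \<subseteq> {x \<in> space ?P. P (lift x) = 0}"
    using proj lift_proj by auto
  ultimately show "\<exists>Z\<in>null_sets (PiM (UNIV - {k0}) (\<lambda>_. lborel)).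
      (\<lambda>p. restrict (\<lambda>i. p$i) (UNIV - {k0})) ` {p \<in> prob_simplex. P p = 0} \<subseteq> Z"
    unfolding proj_def[abs_def] I_def by blast
qed

lemma simplex_null_boundary: "simplex_null {p \<in> prob_simplex :: (real^'k::finite) set. \<exists>i. p$i = 0}"
proof -
  have "polyfun (range (\<lambda>i x. x$i)) (\<lambda>p::real^'k. \<Prod>i\<in>UNIV. p$i)"
    by (intro polyfun_prod) (auto intro: polyfun.var)
  then have "simplex_null {p \<in> prob_simplex :: (real^'k) set. (\<Prod>i\<in>UNIV. p$i) = 0}"
    by (rule simplex_null_polyfun_zero_set[where q = "\<chi> _. 1 / real CARD('k)"])
      (auto simp: prob_simplex_def)
  then show ?thesis by (rule simplex_null_subset) auto
qed

section \<open>Mixtures of distributions\<close>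

lemma sets_mixture [simp]: "sets (mixture M D r) = sets M"
  unfolding mixture_def using sets.space_closed[of M]
  by (simp add: sets_measure_of_conv sets.sigma_sets_eq)

lemma space_mixture [simp]: "space (mixture M D r) = space M"
  unfolding mixture_def by (simp add: space_measure_of_conv)

lemma measurable_PiM_mixture [simp]:
  "measurable (PiM I (\<lambda>_. mixture M D r)) N = measurable (PiM I (\<lambda>_. M)) N"
  by (intro measurable_cong_sets sets_PiM_cong) simp_all

lemma emeasure_mixture:
  fixes r :: "real^'k::finite"
  assumes D: "\<And>k. sets (D k) = sets M" and X: "X \<in> sets M"
  shows "emeasure (mixture M D r) X = (\<Sum>k\<in>UNIV. ennreal (r$k) * emeasure (D k) X)"
  unfolding mixture_def
proof (rule emeasure_measure_of_sigma[OF sets.sigma_algebra_axioms _ _ X])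
  show "positive (sets M) (\<lambda>X. \<Sum>k\<in>UNIV. ennreal (r$k) * emeasure (D k) X)"
    by (simp add: positive_def)
  show "countably_additive (sets M) (\<lambda>X. \<Sum>k\<in>UNIV. ennreal (r$k) * emeasure (D k) X)"
    unfolding countably_additive_def
  proof (intro allI impI)
    fix A :: "nat \<Rightarrow> _" assume A: "range A \<subseteq> sets M" "disjoint_family A" "\<Union> (range A) \<in> sets M"
    have "(\<Sum>i. \<Sum>k\<in>UNIV. ennreal (r$k) * emeasure (D k) (A i)) =
        (\<Sum>k\<in>UNIV. \<Sum>i. ennreal (r$k) * emeasure (D k) (A i))"
      by (rule suminf_sum) (rule summableI)
    also have "\<dots> = (\<Sum>k\<in>UNIV. ennreal (r$k) * emeasure (D k) (\<Union> (range A)))"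
      using A D by (simp add: suminf_emeasure)
    finally show "(\<Sum>i. \<Sum>k\<in>UNIV. ennreal (r$k) * emeasure (D k) (A i)) =
        (\<Sum>k\<in>UNIV. ennreal (r$k) * emeasure (D k) (\<Union> (range A)))" .
  qed
qed

lemma nn_integral_mixture:
  fixes r :: "real^'k::finite"
  assumes D: "\<And>k. sets (D k) = sets M" and f: "f \<in> borel_measurable M"
  shows "(\<integral>\<^sup>+x. f x \<partial>mixture M D r) = (\<Sum>k\<in>UNIV. ennreal (r$k) * (\<integral>\<^sup>+x. f x \<partial>D k))"
  using f
proof induction
  case (cong f g)
  have "space (D k) = space M" for k using D sets_eq_imp_space_eq by blast
  with cong show ?case by (simp cong: nn_integral_cong_simp)
next
  case (set A)
  then show ?case using D by (simp add: emeasure_mixture)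
next
  case (mult u c)
  then have "u \<in> borel_measurable (D k)" "u \<in> borel_measurable (mixture M D r)" for k
    using D by (auto cong: measurable_cong_sets)
  with mult show ?case
    by (simp add: nn_integral_cmult sum_distrib_left mult.left_commute)
next
  case (add u v)
  then have "u \<in> borel_measurable (D k)" "v \<in> borel_measurable (D k)"
    "u \<in> borel_measurable (mixture M D r)" "v \<in> borel_measurable (mixture M D r)" for k
    using D by (auto cong: measurable_cong_sets)
  with add show ?case by (simp add: nn_integral_add distrib_left sum.distrib)
next
  case (seq U)
  then have U: "U i \<in> borel_measurable (D k)" "U i \<in> borel_measurable (mixture M D r)" for i k
    using D by (auto cong: measurable_cong_sets)
  have "incseq (\<lambda>i. ennreal (r$k) * integral\<^sup>N (D k) (U i))" for k
    using seq U by (auto simp: incseq_def le_fun_def intro!: mult_left_mono nn_integral_mono)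
  with seq U show ?case
    by (simp add: nn_integral_monotone_convergence_SUP SUP_mult_left_ennreal image_comp
        flip: ennreal_SUP_sum)
qed

lemma prob_space_mixture:
  fixes r :: "real^'k::finite"
  assumes D: "\<And>k. sets (D k) = sets M" "\<And>k. prob_space (D k)" and r: "r \<in> prob_simplex"
  shows "prob_space (mixture M D r)"
proof (rule prob_spaceI)
  have "emeasure (D k) (space M) = 1" for k
    using D prob_space.emeasure_space_1 sets_eq_imp_space_eq by metis
  then have "emeasure (mixture M D r) (space M) = (\<Sum>k\<in>UNIV. ennreal (r$k))"
    using D by (simp add: emeasure_mixture)
  also have "\<dots> = 1" using r by (simp add: prob_simplex_def)
  finally show "emeasure (mixture M D r) (space (mixture M D r)) = 1" by simp
qed

lemma sets_PiM_assignment: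
  assumes "\<And>k. sets (D k) = sets M"
  shows "sets (PiM I (\<lambda>i. D (s i))) = sets (PiM I (\<lambda>_. M))"
  using assms by (intro sets_PiM_cong) simp_all

lemma borel_measurable_nn_integral_fun_upd:
  assumes D: "sets D = sets M" "sigma_finite_measure D"
    and g: "g \<in> borel_measurable (PiM (insert n I) (\<lambda>_. M))"
  shows "(\<lambda>x. \<integral>\<^sup>+y. g (x(n := y)) \<partial>D) \<in> borel_measurable (PiM I (\<lambda>_. M))"
proof -
  have sets_eq: "sets (PiM I (\<lambda>_. M) \<Otimes>\<^sub>M D) = sets (PiM I (\<lambda>_. M) \<Otimes>\<^sub>M M)"
    by (rule sets_pair_measure_cong) (simp_all add: D)
  have "(\<lambda>(x, y). g (x(n := y))) \<in> borel_measurable (PiM I (\<lambda>_. M) \<Otimes>\<^sub>M M)"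
    using measurable_comp[OF measurable_add_dim[of n I "\<lambda>_. M"] g]
    by (simp add: o_def case_prod_beta')
  then have "(\<lambda>(x, y). g (x(n := y))) \<in> borel_measurable (PiM I (\<lambda>_. M) \<Otimes>\<^sub>M D)"
    unfolding measurable_cong_sets[OF sets_eq refl] .
  with D(2) show ?thesis by (rule sigma_finite_measure.borel_measurable_nn_integral)
qed

lemma nn_integral_PiM_fun_upd:
  assumes D: "\<And>k. sets (D k) = sets M" "\<And>k. prob_space (D k)"
    and g: "g \<in> borel_measurable (PiM {..<Suc n} (\<lambda>_. M))"
  shows "(\<integral>\<^sup>+x. (\<integral>\<^sup>+y. g (x(n := y)) \<partial>D k) \<partial>PiM {..<n} (\<lambda>i. D (s i))) =
    (\<integral>\<^sup>+x. g x \<partial>PiM {..<Suc n} (\<lambda>i. D ((s(n := k)) i)))"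
proof -
  interpret product_sigma_finite "\<lambda>i. D ((s(n := k)) i)"
    using D by (simp add: product_sigma_finite_def prob_space_imp_sigma_finite)
  have ins: "{..<Suc n} = insert n {..<n}" by auto
  have "g \<in> borel_measurable (PiM (insert n {..<n}) (\<lambda>i. D ((s(n := k)) i)))"
    unfolding measurable_cong_sets[OF sets_PiM_assignment[of D M, OF D(1)] refl] using g ins by simp
  moreover have "PiM {..<n} (\<lambda>i. D ((s(n := k)) i)) = PiM {..<n} (\<lambda>i. D (s i))"
    by (rule PiM_cong) auto
  ultimately show ?thesis
    using product_nn_integral_insert[of "{..<n}" n g] by (simp add: ins)
qed

lemma nn_integral_PiM_mixture:
  fixes r :: "real^'k::finite"
  assumes D: "\<And>k. sets (D k) = sets M" "\<And>k. prob_space (D k)" and r: "r \<in> prob_simplex"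
    and g: "g \<in> borel_measurable (PiM {..<n} (\<lambda>_. M))"
  shows "(\<integral>\<^sup>+x. g x \<partial>PiM {..<n} (\<lambda>_. mixture M D r)) =
    (\<Sum>s\<in>assignments n. ennreal (\<Prod>i<n. r$(s i)) * (\<integral>\<^sup>+x. g x \<partial>PiM {..<n} (\<lambda>i. D (s i))))"
  using g
proof (induction n arbitrary: g)
  case 0
  then show ?case by (simp add: assignments_def PiM_empty)
next
  case (Suc n)
  let ?R = "mixture M D r"
  have r_nonneg: "0 \<le> r$k" for k using r by (simp add: prob_simplex_def)
  have ins: "{..<Suc n} = insert n {..<n}" by auto
  interpret R: product_sigma_finite "\<lambda>_. ?R"
    using prob_space_mixture[OF D r]
    by (simp add: product_sigma_finite_def prob_space_imp_sigma_finite)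
  have gM: "g \<in> borel_measurable (PiM (insert n {..<n}) (\<lambda>_. M))" using Suc.prems ins by simp
  have g_upd: "(\<lambda>y. g (x(n := y))) \<in> borel_measurable M"
    if "x \<in> space (PiM {..<n} (\<lambda>_. M))" for x
    using measurable_comp[OF measurable_component_update[OF that, of n] gM] by (simp add: o_def)
  define h where "h k x = (\<integral>\<^sup>+y. g (x(n := y)) \<partial>D k)" for k x
  have h: "h k \<in> borel_measurable (PiM {..<n} (\<lambda>_. M))" for k
    unfolding h_def using D gM by (intro borel_measurable_nn_integral_fun_upd prob_space_imp_sigma_finite)
  have h_integral: "(\<integral>\<^sup>+x. h k x \<partial>PiM {..<n} (\<lambda>i. D (s i))) =
      (\<integral>\<^sup>+x. g x \<partial>PiM {..<Suc n} (\<lambda>i. D ((s(n := k)) i)))" for k s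
    unfolding h_def by (rule nn_integral_PiM_fun_upd[of D M, OF D Suc.prems])
  have weight: "ennreal (r$k) * ennreal (\<Prod>i<n. r$(s i)) = ennreal (\<Prod>i<Suc n. r$((s(n := k)) i))"
    for k s
  proof -
    have "(\<Prod>i<n. r$((s(n := k)) i)) = (\<Prod>i<n. r$(s i))" by (rule prod.cong) auto
    then show ?thesis using r_nonneg by (simp add: ennreal_mult' prod_nonneg mult.commute)
  qed
  have "(\<integral>\<^sup>+x. g x \<partial>PiM {..<Suc n} (\<lambda>_. ?R)) =
      (\<integral>\<^sup>+x. (\<integral>\<^sup>+y. g (x(n := y)) \<partial>?R) \<partial>PiM {..<n} (\<lambda>_. ?R))"
    using R.product_nn_integral_insert[of "{..<n}" n g] gM by (simp add: ins)
  also have "\<dots> = (\<integral>\<^sup>+x. (\<Sum>k\<in>UNIV. ennreal (r$k) * h k x) \<partial>PiM {..<n} (\<lambda>_. ?R))"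
    by (intro nn_integral_cong)
      (simp add: h_def nn_integral_mixture[OF D(1) g_upd] space_PiM)
  also have "\<dots> = (\<Sum>k\<in>UNIV. ennreal (r$k) * (\<integral>\<^sup>+x. h k x \<partial>PiM {..<n} (\<lambda>_. ?R)))"
    using h by (simp add: nn_integral_sum nn_integral_cmult)
  also have "\<dots> = (\<Sum>k\<in>UNIV. \<Sum>s\<in>assignments n. ennreal (r$k) * ennreal (\<Prod>i<n. r$(s i)) *
      (\<integral>\<^sup>+x. g x \<partial>PiM {..<Suc n} (\<lambda>i. D ((s(n := k)) i))))"
    by (simp add: Suc.IH[OF h] h_integral sum_distrib_left mult.assoc)
  also have "\<dots> = (\<Sum>s\<in>assignments (Suc n).
      ennreal (\<Prod>i<Suc n. r$(s i)) * (\<integral>\<^sup>+x. g x \<partial>PiM {..<Suc n} (\<lambda>i. D (s i))))"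
    by (simp add: sum_assignments_Suc weight)
  finally show ?case .
qed

text \<open>A product of mixtures with positive weights dominates each of its components.\<close>

lemma integrable_PiM_assignment:
  fixes r :: "real^'k::finite"
  assumes D: "\<And>k. sets (D k) = sets M" "\<And>k. prob_space (D k)"
    and r: "r \<in> prob_simplex" "\<And>k. 0 < r$k"
    and g: "integrable (PiM {..<n} (\<lambda>_. mixture M D r)) g" and s: "s \<in> assignments n"
  shows "integrable (PiM {..<n} (\<lambda>i. D (s i))) (g :: _ \<Rightarrow> real)"
proof -
  have gM: "g \<in> borel_measurable (PiM {..<n} (\<lambda>_. M))"
    using borel_measurable_integrable[OF g] by simp
  have "(\<Sum>s\<in>assignments n. ennreal (\<Prod>i<n. r$(s i)) *
      (\<integral>\<^sup>+x. norm (g x) \<partial>PiM {..<n} (\<lambda>i. D (s i)))) < \<infinity>"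
    using g nn_integral_PiM_mixture[OF D r(1), of "\<lambda>x. norm (g x)"] gM
    by (simp add: integrable_iff_bounded)
  with s have "ennreal (\<Prod>i<n. r$(s i)) * (\<integral>\<^sup>+x. norm (g x) \<partial>PiM {..<n} (\<lambda>i. D (s i))) < \<infinity>"
    by simp
  moreover have "0 < (\<Prod>i<n. r$(s i))" using r(2) by (simp add: prod_pos)
  ultimately have "(\<integral>\<^sup>+x. norm (g x) \<partial>PiM {..<n} (\<lambda>i. D (s i))) < \<infinity>"
    using r(2) by (auto simp: ennreal_mult_less_top less_le)
  moreover have "g \<in> borel_measurable (PiM {..<n} (\<lambda>i. D (s i)))"
    unfolding measurable_cong_sets[OF sets_PiM_assignment[of D M, OF D(1)] refl] by (rule gM)
  ultimately show ?thesis by (simp add: integrable_iff_bounded)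
qed

lemma integral_PiM_mixture:
  fixes r :: "real^'k::finite"
  assumes D: "\<And>k. sets (D k) = sets M" "\<And>k. prob_space (D k)" and r: "r \<in> prob_simplex"
    and g: "integrable (PiM {..<n} (\<lambda>_. mixture M D r)) g"
    and g_s: "\<And>s. s \<in> assignments n \<Longrightarrow> integrable (PiM {..<n} (\<lambda>i. D (s i))) g"
  shows "(\<integral>x. g x \<partial>PiM {..<n} (\<lambda>_. mixture M D r)) =
    (\<Sum>s\<in>assignments n. (\<Prod>i<n. r$(s i)) * (\<integral>x. g x \<partial>PiM {..<n} (\<lambda>i. D (s i))))"
proof -
  have gM: "g \<in> borel_measurable (PiM {..<n} (\<lambda>_. M))"
    using borel_measurable_integrable[OF g] by simp
  have w: "0 \<le> (\<Prod>i<n. r$(s i))" for s using r by (simp add: prob_simplex_def prod_nonneg)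
  have part: "enn2real (\<integral>\<^sup>+x. ennreal (f x) \<partial>PiM {..<n} (\<lambda>_. mixture M D r)) =
      (\<Sum>s\<in>assignments n. (\<Prod>i<n. r$(s i)) * enn2real (\<integral>\<^sup>+x. ennreal (f x) \<partial>PiM {..<n} (\<lambda>i. D (s i))))"
    if f: "f = g \<or> f = (\<lambda>x. - g x)" for f
  proof -
    have "f \<in> borel_measurable (PiM {..<n} (\<lambda>_. M))" using f gM by auto
    moreover have "(\<integral>\<^sup>+x. ennreal (f x) \<partial>PiM {..<n} (\<lambda>i. D (s i))) < \<infinity>"
      if "s \<in> assignments n" for s
      using integrableD(2,3)[OF g_s[OF that]] f by (auto simp: top.not_eq_extremum)
    ultimately show ?thesis
      using w by (simp add: nn_integral_PiM_mixture[OF D r] enn2real_sum enn2real_mult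
          ennreal_mult_less_top)
  qed
  show ?thesis
    using part[of g] part[of "\<lambda>x. - g x"]
    by (simp add: real_lebesgue_integral_def[OF g] real_lebesgue_integral_def[OF g_s]
        right_diff_distrib sum_subtractf cong: sum.cong)
qed

lemma exp_err_eq_hom_poly:
  fixes D :: "'k::finite \<Rightarrow> 'z measure"
  assumes D: "\<And>k. prob_space (D k)" "\<And>k. sets (D k) = sets M"
    and loss: "\<forall>r\<in>prob_simplex. \<forall>k. integrable (PiM {..<N} (\<lambda>_. mixture M D r) \<Otimes>\<^sub>M D k)
                                  (\<lambda>(S, z). loss (A S) z)"
    and r: "r \<in> prob_simplex"
  shows "exp_err M D loss A N r k =
    hom_poly (\<lambda>s. \<integral>S. (\<integral>z. loss (A S) z \<partial>D k) \<partial>PiM {..<N} (\<lambda>i. D (s i))) N r"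
proof -
  define \<phi> where "\<phi> S = (\<integral>z. loss (A S) z \<partial>D k)" for S
  have \<phi>: "integrable (PiM {..<N} (\<lambda>_. mixture M D r')) \<phi>" if r': "r' \<in> prob_simplex" for r'
  proof -
    interpret pair_sigma_finite "PiM {..<N} (\<lambda>_. mixture M D r')" "D k"
      using prob_space_mixture[OF D(2,1) r'] D(1)
      by (simp add: pair_sigma_finite_def prob_space_imp_sigma_finite prob_space_PiM)
    show ?thesis
      using integrable_fst'[OF loss[rule_format, OF r']] by (simp add: \<phi>_def[abs_def])
  qed
  define u :: "real^'k" where "u = (\<chi> _. 1 / real CARD('k))"
  have u: "u \<in> prob_simplex" "\<And>k. 0 < u$k" by (simp_all add: u_def prob_simplex_def)
  have "exp_err M D loss A N r k = (\<integral>S. \<phi> S \<partial>PiM {..<N} (\<lambda>_. mixture M D r))"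
    by (simp add: exp_err_def \<phi>_def)
  also have "\<dots> = (\<Sum>s\<in>assignments N. (\<Prod>i<N. r$(s i)) * (\<integral>S. \<phi> S \<partial>PiM {..<N} (\<lambda>i. D (s i))))"
    using \<phi>[OF r] integrable_PiM_assignment[OF D(2,1) u \<phi>[OF u(1)]]
    by (rule integral_PiM_mixture[OF D(2,1) r])
  finally show ?thesis by (simp add: hom_poly_def \<phi>_def mult.commute)
qed

section \<open>The Lagrange defect\<close>

definition lagrange_defect :: "((nat \<Rightarrow> 'k::finite) \<Rightarrow> 'k \<Rightarrow> real) \<Rightarrow> nat \<Rightarrow> 'k \<Rightarrow> real^'k \<Rightarrow> real" where
  "lagrange_defect c n j p =
     (\<Sum>i\<in>UNIV. p$i) * (\<Sum>k\<in>UNIV. p$k * hom_poly_deriv (\<lambda>s. c s k) n p (axis j 1))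
     - real n * (\<Sum>k\<in>UNIV. p$k * hom_poly (\<lambda>s. c s k) n p)"

lemma polyfun_lagrange_defect: "polyfun (range (\<lambda>i x. x$i)) (lagrange_defect c n j)"
  unfolding lagrange_defect_def[abs_def] hom_poly_deriv_def hom_poly_def
  by (intro polyfun_diff polyfun.mult polyfun_sum polyfun_prod polyfun.const finite_assignments
      finite_lessThan finite_Diff polyfun.var finite) auto

lemma lagrange_defect_scaleR:
  fixes p :: "real^'k::finite"
  assumes "n \<ge> 1"
  shows "lagrange_defect c n j (t *\<^sub>R p) = t ^ (n + 1) * lagrange_defect c n j p"
proof -
  have t: "t * t ^ (n - 1) = t ^ n" using assms by (simp flip: power_Suc)
  have "(t *\<^sub>R p)$k * (t ^ (n - 1) * x) = t ^ n * (p$k * x)" for k x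
    unfolding t[symmetric] by (simp add: mult_ac)
  then have deriv: "(\<Sum>k\<in>UNIV. (t *\<^sub>R p)$k * (t ^ (n - 1) * X k)) = t ^ n * (\<Sum>k\<in>UNIV. p$k * X k)"
    for X :: "'k \<Rightarrow> real"
    unfolding sum_distrib_left by (rule sum.cong[OF refl])
  have val: "(\<Sum>k\<in>UNIV. (t *\<^sub>R p)$k * (t ^ n * X k)) = t ^ (n + 1) * (\<Sum>k\<in>UNIV. p$k * X k)"
    for X :: "'k \<Rightarrow> real"
    by (simp add: sum_distrib_left mult_ac)
  have norm: "(\<Sum>i\<in>UNIV. (t *\<^sub>R p)$i) = t * (\<Sum>i\<in>UNIV. p$i)"
    by (simp add: sum_distrib_left)
  show ?thesis
    unfolding lagrange_defect_def hom_poly_scaleR hom_poly_deriv_scaleR deriv val norm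
    by (simp add: algebra_simps)
qed

lemma sum_hom_poly_deriv_if_lagrange_defect_eq_0:
  fixes p :: "real^'k::finite"
  assumes S: "0 < (\<Sum>i\<in>UNIV. p$i)" and defect: "\<And>j. lagrange_defect c n j p = 0"
  shows "(\<Sum>k\<in>UNIV. p$k * hom_poly_deriv (\<lambda>s. c s k) n p h) =
    real n * (\<Sum>k\<in>UNIV. p$k * hom_poly (\<lambda>s. c s k) n p) / (\<Sum>i\<in>UNIV. p$i) * (\<Sum>j\<in>UNIV. h$j)"
    (is "?D h = ?c * _")
proof -
  have partial: "?D (axis j 1) = ?c" for j
    using defect[of j] S by (simp add: lagrange_defect_def field_simps)
  have "?D h = (\<Sum>k\<in>UNIV. \<Sum>j\<in>UNIV. h$j * (p$k * hom_poly_deriv (\<lambda>s. c s k) n p (axis j 1)))"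
    by (subst hom_poly_deriv_expansion) (simp add: sum_distrib_left mult.left_commute)
  also have "\<dots> = (\<Sum>j\<in>UNIV. h$j * ?D (axis j 1))"
    by (subst sum.swap) (simp add: sum_distrib_left)
  finally show ?thesis by (simp add: partial sum_distrib_right sum_divide_distrib mult.commute)
qed

context
  fixes M :: "'z measure" and D :: "'k::finite \<Rightarrow> 'z measure"
    and loss :: "'h \<Rightarrow> 'z \<Rightarrow> real" and A :: "(nat \<Rightarrow> 'z) \<Rightarrow> 'h" and N :: nat
    and c :: "(nat \<Rightarrow> 'k) \<Rightarrow> 'k \<Rightarrow> real"
  assumes exp_err: "\<And>r k. r \<in> prob_simplex \<Longrightarrow> exp_err M D loss A N r k = hom_poly (\<lambda>s. c s k) N r"
begin

lemma ferr_eq_hom_poly: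
  assumes "p \<in> orthant_nz"
  shows "ferr M D loss A N p k = hom_poly (\<lambda>s. c s k) N p / (\<Sum>i\<in>UNIV. p$i) ^ N"
  using exp_err[OF normalize_in_prob_simplex[OF assms]]
  by (simp add: ferr_def hom_poly_scaleR power_one_over)

lemma Lsame_eq_hom_poly:
  assumes "p \<in> orthant_nz"
  shows "Lsame M D loss A N p = (\<Sum>k\<in>UNIV. p$k * hom_poly (\<lambda>s. c s k) N p) / (\<Sum>i\<in>UNIV. p$i) ^ N"
  using assms by (simp add: Lsame_def ferr_eq_hom_poly sum_divide_distrib)

lemma LN_eq_hom_poly:
  assumes "r \<in> prob_simplex"
  shows "LN M D loss A N p r = (\<Sum>k\<in>UNIV. p$k * hom_poly (\<lambda>s. c s k) N r)"
  using assms exp_err by (simp add: LN_def ferr_def prob_simplex_def)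

lemma has_derivative_Lsame:
  assumes p: "p \<in> orthant_nz" and defect: "\<And>j. lagrange_defect c N j p = 0"
  shows "(Lsame M D loss A N has_derivative (\<lambda>h. \<Sum>k\<in>UNIV. ferr M D loss A N p k * h$k))
    (at p within orthant_nz)"
proof -
  define S where "S = (\<Sum>i\<in>UNIV. p$i)"
  define T where "T = (\<Sum>k\<in>UNIV. p$k * hom_poly (\<lambda>s. c s k) N p)"
  let ?D = "\<lambda>h. \<Sum>k\<in>UNIV. p$k * hom_poly_deriv (\<lambda>s. c s k) N p h"
  have S: "0 < S" unfolding S_def by (rule orthant_nz_sum_pos[OF p])
  have D: "?D h = real N * T / S * (\<Sum>j\<in>UNIV. h$j)" for h
    unfolding S_def T_def using orthant_nz_sum_pos[OF p] defect
    by (rule sum_hom_poly_deriv_if_lagrange_defect_eq_0)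
  have "((\<lambda>x. (\<Sum>k\<in>UNIV. x$k * hom_poly (\<lambda>s. c s k) N x) / (\<Sum>i\<in>UNIV. x$i) ^ N) has_derivative
      (\<lambda>h. ((\<Sum>k\<in>UNIV. p$k * hom_poly_deriv (\<lambda>s. c s k) N p h + h$k * hom_poly (\<lambda>s. c s k) N p)
        * S ^ N - T * (real N * (\<Sum>i\<in>UNIV. h$i) * S ^ (N - 1))) / (S ^ N * S ^ N)))
      (at p within orthant_nz)"
    unfolding S_def T_def using S[unfolded S_def]
    by (intro has_derivative_divide' has_derivative_sum has_derivative_mult has_derivative_power
        has_derivative_vec_nth has_derivative_hom_poly) auto
  also have "(\<lambda>h. ((\<Sum>k\<in>UNIV. p$k * hom_poly_deriv (\<lambda>s. c s k) N p h + h$k * hom_poly (\<lambda>s. c s k) N p)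
        * S ^ N - T * (real N * (\<Sum>i\<in>UNIV. h$i) * S ^ (N - 1))) / (S ^ N * S ^ N)) =
      (\<lambda>h. \<Sum>k\<in>UNIV. ferr M D loss A N p k * h$k)"
  proof
    fix h :: "real^'k"
    have num: "(\<Sum>k\<in>UNIV. p$k * hom_poly_deriv (\<lambda>s. c s k) N p h + h$k * hom_poly (\<lambda>s. c s k) N p) =
        real N * T / S * (\<Sum>i\<in>UNIV. h$i) + (\<Sum>k\<in>UNIV. h$k * hom_poly (\<lambda>s. c s k) N p)"
      by (simp add: sum.distrib D)
    have pow: "real N * a * S ^ (N - 1) = real N * a * S ^ N / S" for a
      using S by (cases N) simp_all
    have ferr: "(\<Sum>k\<in>UNIV. ferr M D loss A N p k * h$k) = (\<Sum>k\<in>UNIV. h$k * hom_poly (\<lambda>s. c s k) N p) / S ^ N"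
      by (simp add: ferr_eq_hom_poly[OF p] S_def sum_divide_distrib mult.commute)
    show "((\<Sum>k\<in>UNIV. p$k * hom_poly_deriv (\<lambda>s. c s k) N p h + h$k * hom_poly (\<lambda>s. c s k) N p)
        * S ^ N - T * (real N * (\<Sum>i\<in>UNIV. h$i) * S ^ (N - 1))) / (S ^ N * S ^ N) =
      (\<Sum>k\<in>UNIV. ferr M D loss A N p k * h$k)"
      unfolding num pow ferr using S by (simp add: field_simps)
  qed
  finally show ?thesis
    by (rule has_derivative_transform_within[OF _ zero_less_one p]) (simp add: Lsame_eq_hom_poly)
qed

lemma bdd_below_LN:
  assumes "\<And>k. 0 \<le> p$k"
  shows "bdd_below (LN M D loss A N p ` prob_simplex)"
proof (rule bdd_belowI2)
  fix r :: "real^'k" assume r: "r \<in> prob_simplex"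
  have "- (p$k * (\<Sum>s\<in>assignments N. \<bar>c s k\<bar>)) \<le> p$k * hom_poly (\<lambda>s. c s k) N r" for k
  proof -
    have "- (\<Sum>s\<in>assignments N. \<bar>c s k\<bar>) \<le> hom_poly (\<lambda>s. c s k) N r"
      using abs_hom_poly_le[OF r, of "\<lambda>s. c s k" N] by linarith
    then show ?thesis using mult_left_mono[OF _ assms[of k]] by fastforce
  qed
  then show "- (\<Sum>k\<in>UNIV. p$k * (\<Sum>s\<in>assignments N. \<bar>c s k\<bar>)) \<le> LN M D loss A N p r"
    unfolding LN_eq_hom_poly[OF r] sum_negf[symmetric] by (rule sum_mono)
qed

lemma lagrange_defect_eq_0_if_Lsame_eq_Lstar:
  assumes p: "p \<in> prob_simplex" "\<And>i. 0 < p$i"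
    and eq: "Lsame M D loss A N p = Lstar M D loss A N p"
  shows "lagrange_defect c N j p = 0"
proof -
  define \<phi> where "\<phi> r = (\<Sum>k\<in>UNIV. p$k * hom_poly (\<lambda>s. c s k) N r)" for r
  define \<phi>' where "\<phi>' h = (\<Sum>k\<in>UNIV. p$k * hom_poly_deriv (\<lambda>s. c s k) N p h)" for h
  have \<phi>': "(\<phi> has_derivative \<phi>') (at p)"
    unfolding \<phi>_def[abs_def] \<phi>'_def[abs_def]
    by (intro has_derivative_sum has_derivative_mult_right has_derivative_hom_poly)
  have "\<phi> p \<le> \<phi> r" if r: "r \<in> prob_simplex" for r
  proof -
    have "Lstar M D loss A N p \<le> LN M D loss A N p r"
      unfolding Lstar_def using p(2) by (intro cINF_lower[OF bdd_below_LN r]) (simp add: less_imp_le)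
    moreover have "Lsame M D loss A N p = LN M D loss A N p p" by (simp add: Lsame_def LN_def)
    ultimately show ?thesis using eq by (simp add: LN_eq_hom_poly[OF r] LN_eq_hom_poly[OF p(1)] \<phi>_def)
  qed
  then have partials: "\<phi>' (axis i 1) = \<phi>' (axis j 1)" for i
    by (rule simplex_interior_min_partials_eq[OF \<phi>' p])
  have p1: "(\<Sum>i\<in>UNIV. p$i) = 1" using p(1) by (simp add: prob_simplex_def)
  have "real N * \<phi> p = \<phi>' p"
    by (simp add: \<phi>_def \<phi>'_def hom_poly_deriv_self sum_distrib_left mult.left_commute)
  also have "\<dots> = (\<Sum>i\<in>UNIV. p$i * \<phi>' (axis i 1))"
    by (rule linear_vec_expansion[OF has_derivative_linear[OF \<phi>']])
  also have "\<dots> = (\<Sum>i\<in>UNIV. p$i * \<phi>' (axis j 1))"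
    by (rule sum.cong[OF refl]) (rule arg_cong[OF partials])
  also have "\<dots> = \<phi>' (axis j 1)"
    by (simp add: p1 flip: sum_distrib_right)
  finally show ?thesis by (simp add: lagrange_defect_def p1 \<phi>_def \<phi>'_def)
qed

lemma simplex_null_Lsame_eq_Lstar:
  assumes q: "q \<in> prob_simplex" "lagrange_defect c N j q \<noteq> 0"
  shows "simplex_null {p \<in> prob_simplex. Lsame M D loss A N p = Lstar M D loss A N p}"
proof (rule simplex_null_subset)
  show "simplex_null ({p \<in> prob_simplex. \<exists>i. p$i = 0} \<union> {p \<in> prob_simplex. lagrange_defect c N j p = 0})"
    by (intro simplex_null_Un simplex_null_boundary simplex_null_polyfun_zero_set[OF polyfun_lagrange_defect q])
  show "{p \<in> prob_simplex. Lsame M D loss A N p = Lstar M D loss A N p} \<subseteq>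
      {p \<in> prob_simplex. \<exists>i. p$i = 0} \<union> {p \<in> prob_simplex. lagrange_defect c N j p = 0}"
    using lagrange_defect_eq_0_if_Lsame_eq_Lstar by (force simp: prob_simplex_def order_less_le)
qed

end

theorem theoremB3:
  fixes M :: "'z measure" and D :: "'k::finite \<Rightarrow> 'z measure"
    and loss :: "'h \<Rightarrow> 'z \<Rightarrow> real" and A :: "(nat \<Rightarrow> 'z) \<Rightarrow> 'h" and N :: nat
  assumes "CARD('k) \<ge> 2"
    and "N \<ge> 1"
    and "\<forall>k. prob_space (D k)"
    and "\<forall>k. sets (D k) = sets M"
    and "\<forall>r\<in>prob_simplex. \<forall>k. integrable (PiM {..<N} (\<lambda>_. mixture M D r) \<Otimes>\<^sub>M D k)
                                  (\<lambda>(S, z). loss (A S) z)"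
  shows "simplex_null {p \<in> prob_simplex. Lsame M D loss A N p = Lstar M D loss A N p}
       \<or> (\<forall>p \<in> orthant_nz. (Lsame M D loss A N has_derivative
              (\<lambda>h. \<Sum>k\<in>UNIV. ferr M D loss A N p k * h$k)) (at p within orthant_nz))"
proof -
  define c where "c s k = (\<integral>S. (\<integral>z. loss (A S) z \<partial>D k) \<partial>PiM {..<N} (\<lambda>i. D (s i)))" for s k
  have exp_err: "exp_err M D loss A N r k = hom_poly (\<lambda>s. c s k) N r" if "r \<in> prob_simplex" for r k
    unfolding c_def using assms(3-5) that by (intro exp_err_eq_hom_poly) auto
  show ?thesis
  proof (cases "\<forall>p\<in>orthant_nz. \<forall>j. lagrange_defect c N j p = 0")
    case True
    then show ?thesis using has_derivative_Lsame[OF exp_err] by blast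
  next
    case False
    then obtain p j where p: "p \<in> orthant_nz" and defect: "lagrange_defect c N j p \<noteq> 0" by blast
    define q where "q = (1 / (\<Sum>i\<in>UNIV. p$i)) *\<^sub>R p"
    have q: "q \<in> prob_simplex" unfolding q_def by (rule normalize_in_prob_simplex[OF p])
    have "lagrange_defect c N j q \<noteq> 0"
      using defect orthant_nz_sum_pos[OF p] by (simp add: q_def lagrange_defect_scaleR[OF assms(2)])
    then show ?thesis using simplex_null_Lsame_eq_Lstar[OF exp_err q] by blast
  qed
qed

end
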